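(* Let $b\ge2$ be an integer and let $w=d_1\dots d_p$ be a fixed block of $b$-ary digits with $p\ge1$. Let $u=d_1\dots d_{p-1}$ and $v=d_2\dots d_p$. Then $Z_w(\epsilon,0,u)=Z_w(v,0)$ as power series in $t$.
   Context: Strings are finite sequences over $\{0,\dots,b-1\}$, and $\epsilon$ is the empty string. $k_w(X)$ is the number of possibly overlapping occurrences of $w$ in $X$. $Z_w(\epsilon,0,u)=\sum_l a_lt^l$, where $a_l$ is the number of strings of length $l$ with $k_w=0$ and suffix $u$. $Z_w(v,0)=\sum_l c_lt^l$, where $c_l$ is the number of strings of length $l$ with $k_w=0$ and prefix $v$. *)

theory Defs
  imports Main "HOL-Library.Sublist" "HOL-Computational_Algebra.Formal_Power_Series"
begin

definition bstrings :: "nat \<Rightarrow> nat \<Rightarrow> nat list set" where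
  "bstrings b l = {X. length X = l \<and> set X \<subseteq> {..<b}}"

definition occ :: "nat list \<Rightarrow> nat list \<Rightarrow> nat" where
  "occ w X = card {i. i + length w \<le> length X \<and> take (length w) (drop i X) = w}"

text \<open>Z_w(epsilon,0,u): coefficient of t^l counts b-ary strings of length l with k_w = 0 and suffix u.\<close>
definition Z_suffix :: "nat \<Rightarrow> nat list \<Rightarrow> nat list \<Rightarrow> nat fps" where
  "Z_suffix b w u = Abs_fps (\<lambda>l. card {X \<in> bstrings b l. occ w X = 0 \<and> suffix u X})"

text \<open>Z_w(v,0): coefficient of t^l counts b-ary strings of length l with k_w = 0 and prefix v.\<close>
definition Z_prefix :: "nat \<Rightarrow> nat list \<Rightarrow> nat list \<Rightarrow> nat fps" where
  "Z_prefix b w v = Abs_fps (\<lambda>l. card {X \<in> bstrings b l. occ w X = 0 \<and> prefix v X})"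

end

(* Appending last w to a w-free string ending in butlast w gives exactly the strings Y of length
   l + 1 that contain w while butlast Y does not; dually, prepending hd w to a w-free string
   starting with tl w gives the strings Y that contain w while tl Y does not.  Each of these two
   sets is the set of strings whose butlast (resp. tl) is w-free minus the w-free strings, and
   rotating by one letter matches the strings with w-free butlast with those with w-free tl. *)
theory Submission
  imports Defs
begin

lemma occ_eq_0_iff_not_sublist: "occ w X = 0 \<longleftrightarrow> \<not> sublist w X"
proof -
  let ?I = "{i. i + length w \<le> length X \<and> take (length w) (drop i X) = w}"
  have "finite ?I"
    by (rule finite_subset[of _ "{..length X}"]) auto
  moreover have "?I \<noteq> {} \<longleftrightarrow> sublist w X"
  proof
    assume "?I \<noteq> {}"
    then obtain i where "i + length w \<le> length X" "take (length w) (drop i X) = w"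
      by blast
    then have "X = take i X @ w @ drop (length w) (drop i X)"
      by (metis append_take_drop_id)
    then show "sublist w X"
      by (metis sublist_appendI)
  next
    assume "sublist w X"
    then obtain ps ss where "X = ps @ w @ ss"
      by (auto simp: sublist_def)
    then have "length ps \<in> ?I"
      by simp
    then show "?I \<noteq> {}"
      by blast
  qed
  ultimately show ?thesis
    unfolding occ_def by (auto simp: card_eq_0_iff)
qed

lemma finite_bstrings: "finite (bstrings b n)"
  using finite_lists_length_eq[of "{..<b}" n] by (simp add: bstrings_def conj_commute)

lemma card_bstrings_bij:
  assumes "bij f" and "\<And>X. length (f X) = length X" and "\<And>X. set (f X) = set X"
  shows "card {X \<in> bstrings b n. P (f X)} = card {X \<in> bstrings b n. P X}"
proof -
  have "f ` {X \<in> bstrings b n. P (f X)} = {X \<in> bstrings b n. P X}"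
  proof (intro subset_antisym subsetI)
    fix X
    assume "X \<in> {X \<in> bstrings b n. P X}"
    moreover have "f (inv f X) = X"
      using assms(1) by (simp add: bij_is_surj surj_f_inv_f)
    ultimately show "X \<in> f ` {X \<in> bstrings b n. P (f X)}"
      using assms(2,3)[of "inv f X"] by (auto simp: bstrings_def intro!: image_eqI[of X f "inv f X"])
  qed (use assms(2,3) in \<open>auto simp: bstrings_def\<close>)
  moreover have "inj_on f {X \<in> bstrings b n. P (f X)}"
    using assms(1) bij_is_inj inj_on_subset by blast
  ultimately show ?thesis
    by (metis card_image)
qed

lemma butlast_rotate1: "butlast (rotate1 xs) = tl xs"
  by (cases xs) simp_all

lemma sublist_snoc_if_not_sublist:
  assumes "w \<noteq> []" and "\<not> sublist w X"
  shows "sublist w (X @ [c]) \<longleftrightarrow> last w = c \<and> suffix (butlast w) X"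
  using snoc_sublist_snoc[of "butlast w" "last w" X c] assms by simp

lemma card_avoiding_suffix_eq_card_new_occurrence:
  assumes "w \<noteq> []" and "set w \<subseteq> {..<b}"
  shows "card {X \<in> bstrings b l. \<not> sublist w X \<and> suffix (butlast w) X}
       = card {Y \<in> bstrings b (Suc l). \<not> sublist w (butlast Y) \<and> sublist w Y}"
proof -
  have "last w < b"
    using assms last_in_set by auto
  have "bij_betw (\<lambda>X. X @ [last w])
      {X \<in> bstrings b l. \<not> sublist w X \<and> suffix (butlast w) X}
      {Y \<in> bstrings b (Suc l). \<not> sublist w (butlast Y) \<and> sublist w Y}"
  proof (rule bij_betw_byWitness[where f' = butlast])
    show "(\<lambda>X. X @ [last w]) ` {X \<in> bstrings b l. \<not> sublist w X \<and> suffix (butlast w) X}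
        \<subseteq> {Y \<in> bstrings b (Suc l). \<not> sublist w (butlast Y) \<and> sublist w Y}"
      using \<open>last w < b\<close> sublist_snoc_if_not_sublist[OF assms(1)]
      by (auto simp: bstrings_def)
    have "Y = butlast Y @ [last w] \<and> suffix (butlast w) (butlast Y)"
      if "Y \<in> bstrings b (Suc l)" "\<not> sublist w (butlast Y)" "sublist w Y" for Y
    proof -
      obtain X c where "Y = X @ [c]"
        using \<open>Y \<in> bstrings b (Suc l)\<close> by (cases Y rule: rev_cases) (auto simp: bstrings_def)
      then show ?thesis
        using that sublist_snoc_if_not_sublist[OF assms(1)] by auto
    qed
    then show "butlast ` {Y \<in> bstrings b (Suc l). \<not> sublist w (butlast Y) \<and> sublist w Y}
        \<subseteq> {X \<in> bstrings b l. \<not> sublist w X \<and> suffix (butlast w) X}"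
      and "\<forall>Y \<in> {Y \<in> bstrings b (Suc l). \<not> sublist w (butlast Y) \<and> sublist w Y}.
        butlast Y @ [last w] = Y"
      by (auto simp: bstrings_def dest: in_set_butlastD)
  qed simp
  then show ?thesis
    by (rule bij_betw_same_card)
qed

lemma card_avoiding_prefix_eq_card_new_occurrence:
  assumes "w \<noteq> []" and "set w \<subseteq> {..<b}"
  shows "card {X \<in> bstrings b l. \<not> sublist w X \<and> prefix (tl w) X}
       = card {Y \<in> bstrings b (Suc l). \<not> sublist w (tl Y) \<and> sublist w Y}"
proof -
  have rev_bij: "bij rev" "\<And>X. length (rev X) = length X" "\<And>X. set (rev X) = set X"
    by (simp_all add: o_bij[of rev])
  have "card {X \<in> bstrings b l. \<not> sublist w X \<and> prefix (tl w) X}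
      = card {X \<in> bstrings b l. \<not> sublist (rev w) X \<and> suffix (butlast (rev w)) X}"
    using card_bstrings_bij[OF rev_bij, of b l "\<lambda>X. \<not> sublist (rev w) X \<and> suffix (butlast (rev w)) X"]
    by (simp add: suffix_to_prefix)
  also have "\<dots> = card {Y \<in> bstrings b (Suc l). \<not> sublist (rev w) (butlast Y) \<and> sublist (rev w) Y}"
    by (rule card_avoiding_suffix_eq_card_new_occurrence) (use assms in auto)
  also have "\<dots> = card {Y \<in> bstrings b (Suc l). \<not> sublist w (tl Y) \<and> sublist w Y}"
    using card_bstrings_bij[OF rev_bij, of b "Suc l" "\<lambda>Y. \<not> sublist (rev w) (butlast Y) \<and> sublist (rev w) Y"]
    by simp
  finally show ?thesis .
qed

lemma card_new_occurrence:
  assumes "\<And>Y. sublist (f Y) Y"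
  shows "card {Y \<in> bstrings b n. \<not> sublist w (f Y) \<and> sublist w Y}
       = card {Y \<in> bstrings b n. \<not> sublist w (f Y)} - card {Y \<in> bstrings b n. \<not> sublist w Y}"
proof -
  have "{Y \<in> bstrings b n. \<not> sublist w Y} \<subseteq> {Y \<in> bstrings b n. \<not> sublist w (f Y)}"
    using assms sublist_order.order.trans by blast
  moreover have "{Y \<in> bstrings b n. \<not> sublist w (f Y) \<and> sublist w Y}
      = {Y \<in> bstrings b n. \<not> sublist w (f Y)} - {Y \<in> bstrings b n. \<not> sublist w Y}"
    by blast
  ultimately show ?thesis
    using finite_bstrings by (simp add: card_Diff_subset)
qed

lemma card_new_occurrence_at_end_eq_at_start:
  "card {Y \<in> bstrings b n. \<not> sublist w (butlast Y) \<and> sublist w Y}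
 = card {Y \<in> bstrings b n. \<not> sublist w (tl Y) \<and> sublist w Y}"
proof -
  have "card {Y \<in> bstrings b n. \<not> sublist w (tl Y)} = card {Y \<in> bstrings b n. \<not> sublist w (butlast Y)}"
    using card_bstrings_bij[OF bij_rotate1 length_rotate1 set_rotate1, of b n "\<lambda>Y. \<not> sublist w (butlast Y)"]
    by (simp add: butlast_rotate1)
  then show ?thesis
    by (simp add: card_new_occurrence)
qed

theorem lemma6:
  fixes b :: nat and w :: "nat list"
  assumes "b \<ge> 2" and "length w \<ge> 1" and "set w \<subseteq> {..<b}"
  shows "Z_suffix b w (butlast w) = Z_prefix b w (tl w)"
proof (rule fps_ext)
  fix l
  have w: "w \<noteq> []"
    using assms(2) by auto
  have "fps_nth (Z_suffix b w (butlast w)) l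
      = card {X \<in> bstrings b l. \<not> sublist w X \<and> suffix (butlast w) X}"
    by (simp add: Z_suffix_def occ_eq_0_iff_not_sublist)
  also have "\<dots> = card {Y \<in> bstrings b (Suc l). \<not> sublist w (butlast Y) \<and> sublist w Y}"
    using w assms(3) by (rule card_avoiding_suffix_eq_card_new_occurrence)
  also have "\<dots> = card {Y \<in> bstrings b (Suc l). \<not> sublist w (tl Y) \<and> sublist w Y}"
    by (rule card_new_occurrence_at_end_eq_at_start)
  also have "\<dots> = card {X \<in> bstrings b l. \<not> sublist w X \<and> prefix (tl w) X}"
    using w assms(3) by (rule card_avoiding_prefix_eq_card_new_occurrence[symmetric])
  also have "\<dots> = fps_nth (Z_prefix b w (tl w)) l"
    by (simp add: Z_prefix_def occ_eq_0_iff_not_sublist)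
  finally show "fps_nth (Z_suffix b w (butlast w)) l = fps_nth (Z_prefix b w (tl w)) l" .
qed

end
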